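(* Consider the SBCM described in the context with parameters $\gamma>0$ and $\delta\ge 0$, and let $\mathbf{x}$ be a steady state. Suppose there exists a persuadable node $i\in\mathcal{P}$ such that $$(1-w_{ij})(x_j-x_i)^2>\frac{1}{2\gamma}\quad\text{for all } j\sim i,$$ where $w_{ij}=w(x_i,x_j)$. Then the matrix $\mathbf{J}_{\mathcal{P}}$ (and hence the Jacobian matrix $\mathbf{J}$ of $\mathbf{F}$) evaluated at $\mathbf{x}$ has at least one strictly positive eigenvalue.
   Context: Let $\mathcal{G}$ be a finite undirected unweighted graph without self-loops, with node set $\mathcal{N}$; write $i\sim j$ if nodes $i,j$ are adjacent. The node set is partitioned into a set $\mathcal{Z}$ of zealots and a set $\mathcal{P}=\mathcal{N}\setminus\mathcal{Z}$ of persuadable nodes; every persuadable node is assumed to have at least one neighbor. Fix $\gamma,\delta\ge 0$. The influence function is $w(x_i,x_j)=\frac{1}{1+e^{\gamma(x_i-x_j)^2-\gamma\delta}}$ if $i\sim j$ and $w(x_i,x_j)=0$ otherwise. For an opinion vector $\mathbf{x}\in\mathbb{R}^{\mathcal{N}}$, the sigmoidal bounded-confidence model (SBCM) is $\frac{dx_i}{dt}=f_i(\mathbf{x})$, where $f_i(\mathbf{x})=\frac{\sum_j w(x_i,x_j)(x_j-x_i)}{\sum_j w(x_i,x_j)}$ for $i\in\mathcal{P}$ and $f_i(\mathbf{x})=0$ for $i\in\mathcal{Z}$; $\mathbf{F}=(f_i)_i$. A steady state is an $\mathbf{x}$ with $\mathbf{F}(\mathbf{x})=\mathbf{0}$. $\mathbf{J}$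 denotes the Jacobian matrix of $\mathbf{F}$ and $\mathbf{J}_{\mathcal{P}}$ its submatrix of entries $\partial f_i/\partial x_j$ with $i,j\in\mathcal{P}$. *)

theory Defs
  imports "HOL-Analysis.Analysis"
begin

definition sbcm_w :: "('n \<Rightarrow> 'n \<Rightarrow> bool) \<Rightarrow> real \<Rightarrow> real \<Rightarrow> real \<Rightarrow> real \<Rightarrow> 'n \<Rightarrow> 'n \<Rightarrow> real" where
  "sbcm_w E \<gamma> \<delta> xi xj i j =
     (if E i j then 1 / (1 + exp (\<gamma> * (xi - xj)^2 - \<gamma> * \<delta>)) else 0)"

definition sbcm_f :: "('n::finite \<Rightarrow> 'n \<Rightarrow> bool) \<Rightarrow> 'n set \<Rightarrow> real \<Rightarrow> real \<Rightarrow> 'n \<Rightarrow> ('n \<Rightarrow> real) \<Rightarrow> real" where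
  "sbcm_f E Z \<gamma> \<delta> i x =
     (if i \<in> Z then 0
      else (\<Sum>j\<in>UNIV. sbcm_w E \<gamma> \<delta> (x i) (x j) i j * (x j - x i))
           / (\<Sum>j\<in>UNIV. sbcm_w E \<gamma> \<delta> (x i) (x j) i j))"

definition partial_deriv :: "(('n \<Rightarrow> real) \<Rightarrow> real) \<Rightarrow> 'n \<Rightarrow> ('n \<Rightarrow> real) \<Rightarrow> real" where
  "partial_deriv g j x = deriv (\<lambda>t. g (x(j := t))) (x j)"

definition sbcm_jacobian :: "('n::finite \<Rightarrow> 'n \<Rightarrow> bool) \<Rightarrow> 'n set \<Rightarrow> real \<Rightarrow> real \<Rightarrow> ('n \<Rightarrow> real) \<Rightarrow> 'n \<Rightarrow> 'n \<Rightarrow> real" where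
  "sbcm_jacobian E Z \<gamma> \<delta> x i j = partial_deriv (sbcm_f E Z \<gamma> \<delta> i) j x"

definition is_eigenvalue_sub :: "('n::finite \<Rightarrow> 'n \<Rightarrow> real) \<Rightarrow> 'n set \<Rightarrow> real \<Rightarrow> bool" where
  "is_eigenvalue_sub M S lam \<longleftrightarrow>
     (\<exists>v :: 'n \<Rightarrow> real. (\<forall>k. k \<notin> S \<longrightarrow> v k = 0) \<and> (\<exists>k\<in>S. v k \<noteq> 0) \<and>
        (\<forall>i\<in>S. (\<Sum>j\<in>S. M i j * v j) = lam * v i))"

end

theory Submission
  imports Defs
begin

text \<open>At a steady state the numerator of f_k vanishes, so the Jacobian row of a persuadable
  node k is J_kl = M_kl / W_k, where W_k is the total influence on k and M = A - diag (A 1) is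
  built from the symmetric couplings A_kl = w (1 - 2\<gamma> (1 - w) (x_l - x_k)^2), the derivative
  of d \<mapsto> w(d) d at d = x_l - x_k. Hence J_P is similar to the symmetric matrix
  W^(-1/2) M_P W^(-1/2), whose largest eigenvalue, the maximum of its Rayleigh quotient, is at
  least each of its diagonal entries. The hypothesis on i says exactly that all couplings A_ij
  are negative, so M_ii = - \<Sum>_j A_ij > 0.\<close>

lemma quadratic_nonpos_imp_linear_coeff_zero:
  fixes b c :: real
  assumes "\<And>t. t * b + t\<^sup>2 * c \<le> 0"
  shows "b = 0"
proof (rule ccontr)
  assume "b \<noteq> 0"
  define a where "a = \<bar>c\<bar> + 1"
  define t where "t = b / a"
  have "0 < a"
    by (simp add: a_def add_nonneg_pos)
  then have "t \<noteq> 0" and "t * b = t\<^sup>2 * a"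
    using \<open>b \<noteq> 0\<close> by (simp_all add: t_def power2_eq_square)
  moreover have "0 \<le> t\<^sup>2 * (\<bar>c\<bar> + c)"
    by simp
  ultimately have "t\<^sup>2 \<le> t * b + t\<^sup>2 * c"
    by (simp add: a_def algebra_simps)
  then show False
    using assms[of t] \<open>t \<noteq> 0\<close> by (smt (verit) zero_less_power2)
qed

definition quad_form :: "('n \<Rightarrow> 'n \<Rightarrow> real) \<Rightarrow> 'n set \<Rightarrow> ('n \<Rightarrow> real) \<Rightarrow> real" where
  "quad_form S P u = (\<Sum>a\<in>P. \<Sum>b\<in>P. S a b * u a * u b)"

lemma quad_form_add_axis:
  fixes S :: "'n::finite \<Rightarrow> 'n \<Rightarrow> real"
  assumes sym: "\<And>a b. S a b = S b a" and "k \<in> P"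
  shows "quad_form S P (\<lambda>l. u l + t * of_bool (l = k))
    = quad_form S P u + 2 * t * (\<Sum>l\<in>P. S k l * u l) + t\<^sup>2 * S k k"
proof -
  have "quad_form S P (\<lambda>l. u l + t * of_bool (l = k))
      = (\<Sum>a\<in>P. \<Sum>b\<in>P. S a b * u a * u b + t * (S a b * u b * of_bool (a = k))
          + t * (S a b * u a * of_bool (b = k)) + t\<^sup>2 * (S a b * of_bool (b = k) * of_bool (a = k)))"
    unfolding quad_form_def by (intro sum.cong refl) (simp add: algebra_simps power2_eq_square)
  also have "\<dots> = quad_form S P u + t * (\<Sum>a\<in>P. \<Sum>b\<in>P. S a b * u b * of_bool (a = k))
        + t * (\<Sum>a\<in>P. \<Sum>b\<in>P. S a b * u a * of_bool (b = k))
        + t\<^sup>2 * (\<Sum>a\<in>P. \<Sum>b\<in>P. S a b * of_bool (b = k) * of_bool (a = k))"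
    unfolding quad_form_def by (simp only: sum.distrib sum_distrib_left)
  also have "(\<Sum>a\<in>P. \<Sum>b\<in>P. S a b * u b * of_bool (a = k)) = (\<Sum>l\<in>P. S k l * u l)"
    using \<open>k \<in> P\<close> by (simp only: sum_distrib_right[symmetric]) simp
  also have "(\<Sum>a\<in>P. \<Sum>b\<in>P. S a b * u a * of_bool (b = k)) = (\<Sum>l\<in>P. S k l * u l)"
    using \<open>k \<in> P\<close> by (simp add: sym[of _ k])
  also have "(\<Sum>a\<in>P. \<Sum>b\<in>P. S a b * of_bool (b = k) * of_bool (a = k)) = S k k"
    using \<open>k \<in> P\<close> by (simp only: sum_distrib_right[symmetric]) simp
  finally show ?thesis
    by simp
qed

lemma sum_square_add_axis:
  fixes u :: "'n::finite \<Rightarrow> real"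
  assumes "k \<in> P"
  shows "(\<Sum>l\<in>P. (u l + t * of_bool (l = k))\<^sup>2) = (\<Sum>l\<in>P. (u l)\<^sup>2) + 2 * t * u k + t\<^sup>2"
proof -
  have "(\<Sum>l\<in>P. (u l + t * of_bool (l = k))\<^sup>2)
      = (\<Sum>l\<in>P. (u l)\<^sup>2 + 2 * t * (u l * of_bool (l = k)) + t\<^sup>2 * of_bool (l = k))"
    by (intro sum.cong refl) (simp add: power2_sum)
  also have "\<dots> = (\<Sum>l\<in>P. (u l)\<^sup>2) + 2 * t * u k + t\<^sup>2"
    using assms by (simp add: sum.distrib flip: sum_distrib_left)
  finally show ?thesis .
qed

lemma quad_form_maximizer_is_eigenvector:
  fixes S :: "'n::finite \<Rightarrow> 'n \<Rightarrow> real"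
  assumes sym: "\<And>a b. S a b = S b a" and "k \<in> P"
    and le: "\<And>w. quad_form S P w \<le> \<mu> * (\<Sum>l\<in>P. (w l)\<^sup>2)"
    and eq: "quad_form S P u = \<mu> * (\<Sum>l\<in>P. (u l)\<^sup>2)"
  shows "(\<Sum>l\<in>P. S k l * u l) = \<mu> * u k"
proof -
  have "t * (2 * ((\<Sum>l\<in>P. S k l * u l) - \<mu> * u k)) + t\<^sup>2 * (S k k - \<mu>) \<le> 0" for t
    using le[of "\<lambda>l. u l + t * of_bool (l = k)"] eq
    by (simp add: quad_form_add_axis[OF sym \<open>k \<in> P\<close>] sum_square_add_axis[OF \<open>k \<in> P\<close>] algebra_simps)
  then have "2 * ((\<Sum>l\<in>P. S k l * u l) - \<mu> * u k) = 0"
    by (rule quadratic_nonpos_imp_linear_coeff_zero)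
  then show ?thesis
    by simp
qed

lemma norm_vec_supported:
  fixes v :: "real^'n"
  assumes "\<And>l. l \<notin> P \<Longrightarrow> v $ l = 0"
  shows "norm v = sqrt (\<Sum>l\<in>P. (v $ l)\<^sup>2)"
proof -
  have "(\<Sum>l\<in>UNIV. (v $ l)\<^sup>2) = (\<Sum>l\<in>P. (v $ l)\<^sup>2)"
    using assms by (intro sum.mono_neutral_right) auto
  then show ?thesis
    by (simp add: norm_vec_def L2_set_def)
qed

lemma quad_form_attains_max_on_sphere:
  fixes S :: "'n::finite \<Rightarrow> 'n \<Rightarrow> real"
  assumes "P \<noteq> {}"
  obtains u where "(\<Sum>l\<in>P. (u l)\<^sup>2) = 1"
    and "\<And>w. quad_form S P w \<le> quad_form S P u * (\<Sum>l\<in>P. (w l)\<^sup>2)"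
proof -
  obtain i where "i \<in> P"
    using assms by blast
  define K where "K = sphere (0::real^'n) 1 \<inter> (\<Inter>l\<in>-P. {v. v $ l = 0})"
  have K_iff: "v \<in> K \<longleftrightarrow> (\<Sum>l\<in>P. (v $ l)\<^sup>2) = 1 \<and> (\<forall>l. l \<notin> P \<longrightarrow> v $ l = 0)" for v
    using norm_vec_supported[of P v] by (auto simp: K_def)
  have "compact K"
    unfolding K_def
    by (intro compact_Int_closed compact_sphere closed_INT ballI closed_Collect_eq continuous_intros)
  moreover have "axis i 1 \<in> K"
    using \<open>i \<in> P\<close> norm_axis_1[of i] by (auto simp: K_def axis_def)
  moreover have "continuous_on K (\<lambda>v. quad_form S P (($) v))"
    unfolding quad_form_def by (intro continuous_intros)
  ultimately obtain v0 where "v0 \<in> K" and max: "\<And>v. v \<in> K \<Longrightarrow> quad_form S P (($) v) \<le> quad_form S P (($) v0)"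
    using continuous_attains_sup[of K] by blast
  show ?thesis
  proof
    show "(\<Sum>l\<in>P. (v0 $ l)\<^sup>2) = 1"
      using \<open>v0 \<in> K\<close> K_iff by blast
    fix w :: "'n \<Rightarrow> real"
    define n where "n = (\<Sum>l\<in>P. (w l)\<^sup>2)"
    show "quad_form S P w \<le> quad_form S P (($) v0) * n"
    proof (cases "n = 0")
      case True
      then have "\<And>l. l \<in> P \<Longrightarrow> w l = 0"
        by (simp add: n_def sum_nonneg_eq_0_iff)
      then show ?thesis
        using True by (simp add: quad_form_def)
    next
      case False
      then have "0 < n"
        by (simp add: n_def order_less_le sum_nonneg)
      define y where "y = (\<chi> l. if l \<in> P then w l / sqrt n else 0)"
      have "(\<Sum>l\<in>P. (y $ l)\<^sup>2) = 1"
        using \<open>0 < n\<close> by (simp add: y_def power_divide n_def flip: sum_divide_distrib)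
      then have "y \<in> K"
        by (simp add: K_iff y_def)
      moreover have "quad_form S P (($) y) = quad_form S P w / n"
        using \<open>0 < n\<close> by (simp add: quad_form_def y_def sum_divide_distrib power2_eq_square)
      ultimately show ?thesis
        using max[of y] \<open>0 < n\<close> by (simp add: divide_le_eq mult.commute)
    qed
  qed
qed

lemma symmetric_pos_diag_imp_pos_eigenvalue:
  fixes S :: "'n::finite \<Rightarrow> 'n \<Rightarrow> real"
  assumes sym: "\<And>a b. S a b = S b a" and "i \<in> P" and "0 < S i i"
  shows "\<exists>\<mu>>0. is_eigenvalue_sub S P \<mu>"
proof -
  obtain u where unit: "(\<Sum>l\<in>P. (u l)\<^sup>2) = 1"
    and max: "\<And>w. quad_form S P w \<le> quad_form S P u * (\<Sum>l\<in>P. (w l)\<^sup>2)"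
    using quad_form_attains_max_on_sphere[of P S] \<open>i \<in> P\<close> by blast
  define \<mu> where "\<mu> = quad_form S P u"
  have "quad_form S P (\<lambda>_. 0) = 0"
    by (simp add: quad_form_def)
  then have "S i i \<le> \<mu>"
    using max[of "\<lambda>l. 0 + 1 * of_bool (l = i)"] quad_form_add_axis[OF sym \<open>i \<in> P\<close>, where u = "\<lambda>_. 0" and t = 1]
      sum_square_add_axis[OF \<open>i \<in> P\<close>, where u = "\<lambda>_. 0" and t = 1]
    by (simp add: \<mu>_def)
  have eigen: "(\<Sum>l\<in>P. S k l * u l) = \<mu> * u k" if "k \<in> P" for k
    using max unit by (intro quad_form_maximizer_is_eigenvector[OF sym that]) (simp_all add: \<mu>_def)
  obtain k where "k \<in> P" and "u k \<noteq> 0"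
    using unit by (metis (no_types, lifting) power_zero_numeral sum.neutral zero_neq_one)
  define v where "v l = (if l \<in> P then u l else 0)" for l
  have "is_eigenvalue_sub S P \<mu>"
    unfolding is_eigenvalue_sub_def
  proof (intro exI[of _ v] conjI allI impI ballI)
    show "\<exists>k\<in>P. v k \<noteq> 0"
      using \<open>k \<in> P\<close> \<open>u k \<noteq> 0\<close> by (auto simp: v_def)
  qed (simp_all add: v_def eigen)
  moreover have "0 < \<mu>"
    using \<open>S i i \<le> \<mu>\<close> \<open>0 < S i i\<close> by linarith
  ultimately show ?thesis
    by blast
qed

lemma symmetric_pencil_pos_eigenvalue:
  fixes M J :: "'n::finite \<Rightarrow> 'n \<Rightarrow> real"
  assumes sym: "\<And>a b. M a b = M b a" and W_pos: "\<And>k. k \<in> P \<Longrightarrow> 0 < W k"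
    and J_eq: "\<And>k l. k \<in> P \<Longrightarrow> J k l = M k l / W k"
    and "i \<in> P" and "0 < M i i"
  shows "\<exists>\<mu>>0. is_eigenvalue_sub J P \<mu>"
proof -
  define S where "S k l = M k l / (sqrt (W k) * sqrt (W l))" for k l
  have "\<exists>\<mu>>0. is_eigenvalue_sub S P \<mu>"
    using \<open>i \<in> P\<close> \<open>0 < M i i\<close> W_pos[OF \<open>i \<in> P\<close>]
    by (intro symmetric_pos_diag_imp_pos_eigenvalue) (auto simp: S_def sym mult.commute)
  then obtain \<mu> u where "0 < \<mu>" and u_supp: "\<And>k. k \<notin> P \<Longrightarrow> u k = 0"
    and "\<exists>k\<in>P. u k \<noteq> 0" and u_eigen: "\<And>k. k \<in> P \<Longrightarrow> (\<Sum>l\<in>P. S k l * u l) = \<mu> * u k"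
    unfolding is_eigenvalue_sub_def by blast
  define v where "v l = u l / sqrt (W l)" for l
  have "(\<Sum>l\<in>P. J k l * v l) = \<mu> * v k" if "k \<in> P" for k
  proof -
    have "(\<Sum>l\<in>P. J k l * v l) = (\<Sum>l\<in>P. S k l * u l) / sqrt (W k)"
      unfolding sum_divide_distrib
    proof (intro sum.cong refl)
      fix l
      have "W k = sqrt (W k) * sqrt (W k)"
        using W_pos[OF that] by simp
      then show "J k l * v l = S k l * u l / sqrt (W k)"
        using W_pos[OF that] by (simp add: J_eq[OF that] S_def v_def field_simps)
    qed
    then show ?thesis
      using u_eigen[OF that] by (simp add: v_def)
  qed
  moreover have "\<exists>k\<in>P. v k \<noteq> 0"
    using \<open>\<exists>k\<in>P. u k \<noteq> 0\<close> W_pos by (force simp: v_def)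
  moreover have "\<And>k. k \<notin> P \<Longrightarrow> v k = 0"
    by (simp add: v_def u_supp)
  ultimately have "is_eigenvalue_sub J P \<mu>"
    unfolding is_eigenvalue_sub_def by blast
  then show ?thesis
    using \<open>0 < \<mu>\<close> by blast
qed

lemma is_eigenvalue_sub_UNIV_if_rows_vanish:
  fixes M :: "'n::finite \<Rightarrow> 'n \<Rightarrow> real"
  assumes "is_eigenvalue_sub M S \<mu>" and "\<And>k l. k \<notin> S \<Longrightarrow> M k l = 0"
  shows "is_eigenvalue_sub M UNIV \<mu>"
proof -
  obtain v where supp: "\<And>k. k \<notin> S \<Longrightarrow> v k = 0" and "\<exists>k\<in>S. v k \<noteq> 0"
    and eigen: "\<And>k. k \<in> S \<Longrightarrow> (\<Sum>l\<in>S. M k l * v l) = \<mu> * v k"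
    using assms(1) unfolding is_eigenvalue_sub_def by blast
  have "(\<Sum>l\<in>UNIV. M k l * v l) = (\<Sum>l\<in>S. M k l * v l)" for k
    using supp by (intro sum.mono_neutral_right) auto
  then have "(\<Sum>l\<in>UNIV. M k l * v l) = \<mu> * v k" for k
    using eigen supp assms(2) by (cases "k \<in> S") auto
  then show ?thesis
    unfolding is_eigenvalue_sub_def using \<open>\<exists>k\<in>S. v k \<noteq> 0\<close> by blast
qed

lemma DERIV_divide_numerator_zero:
  assumes "(f has_real_derivative f') (at t)" and "g differentiable (at t)"
    and "f t = 0" and "g t \<noteq> 0"
  shows "((\<lambda>s. f s / g s) has_real_derivative f' / g t) (at t)"
proof -
  obtain g' where "(g has_real_derivative g') (at t)"
    using assms(2) real_differentiable_def by blast
  from DERIV_divide[OF assms(1) this assms(4)] show ?thesis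
    using assms(3,4) by simp
qed

definition influence :: "real \<Rightarrow> real \<Rightarrow> real \<Rightarrow> real" where
  "influence \<gamma> \<delta> d = 1 / (1 + exp (\<gamma> * d\<^sup>2 - \<gamma> * \<delta>))"

definition flux_deriv :: "real \<Rightarrow> real \<Rightarrow> real \<Rightarrow> real" where
  "flux_deriv \<gamma> \<delta> d = influence \<gamma> \<delta> d * (1 - 2 * \<gamma> * (1 - influence \<gamma> \<delta> d) * d\<^sup>2)"

definition sbcm_coupling :: "('n \<Rightarrow> 'n \<Rightarrow> bool) \<Rightarrow> real \<Rightarrow> real \<Rightarrow> ('n \<Rightarrow> real) \<Rightarrow> 'n \<Rightarrow> 'n \<Rightarrow> real" where
  "sbcm_coupling E \<gamma> \<delta> x k l = (if E k l then flux_deriv \<gamma> \<delta> (x l - x k) else 0)"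

definition sbcm_degree :: "('n::finite \<Rightarrow> 'n \<Rightarrow> bool) \<Rightarrow> real \<Rightarrow> real \<Rightarrow> ('n \<Rightarrow> real) \<Rightarrow> 'n \<Rightarrow> real" where
  "sbcm_degree E \<gamma> \<delta> x k = (\<Sum>l\<in>UNIV. sbcm_w E \<gamma> \<delta> (x k) (x l) k l)"

lemma sbcm_w_eq_influence:
  "sbcm_w E \<gamma> \<delta> xi xj i j = (if E i j then influence \<gamma> \<delta> (xj - xi) else 0)"
  by (simp add: sbcm_w_def influence_def power2_commute)

lemma influence_pos: "0 < influence \<gamma> \<delta> d"
  by (simp add: influence_def add_pos_pos)

lemma influence_minus: "influence \<gamma> \<delta> (- d) = influence \<gamma> \<delta> d"
  by (simp add: influence_def)

lemma influence_has_derivative: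
  "(influence \<gamma> \<delta> has_real_derivative
     - 2 * \<gamma> * d * influence \<gamma> \<delta> d * (1 - influence \<gamma> \<delta> d)) (at d)"
proof -
  have pos: "0 < 1 + exp (\<gamma> * d\<^sup>2 - \<gamma> * \<delta>)"
    by (simp add: add_pos_pos)
  show ?thesis
    unfolding influence_def
    by (rule derivative_eq_intros refl)+ (use pos in \<open>auto simp: field_simps power2_eq_square\<close>)
qed

lemma flux_has_derivative:
  "((\<lambda>d. influence \<gamma> \<delta> d * d) has_real_derivative flux_deriv \<gamma> \<delta> d) (at d)"
  unfolding flux_deriv_def
  by (rule derivative_eq_intros influence_has_derivative refl)+ (simp add: algebra_simps power2_eq_square)

lemma coordinate_difference_has_derivative:
  "((\<lambda>t. (x(j := t)) l - (x(j := t)) k) has_real_derivative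
     of_bool (l = j) - of_bool (k = j)) (at t)"
  by (auto intro!: derivative_eq_intros)

lemma sbcm_w_along_coordinate_differentiable:
  "(\<lambda>t. sbcm_w E \<gamma> \<delta> ((x(j := t)) k) ((x(j := t)) l) k l) differentiable (at t)"
proof -
  have "(\<lambda>t. influence \<gamma> \<delta> ((x(j := t)) l - (x(j := t)) k)) differentiable (at t)"
    unfolding real_differentiable_def
    by (rule exI DERIV_chain2[OF influence_has_derivative coordinate_difference_has_derivative])+
  then show ?thesis
    unfolding sbcm_w_eq_influence by (cases "E k l") simp_all
qed

lemma sbcm_numerator_term_has_derivative:
  "((\<lambda>t. sbcm_w E \<gamma> \<delta> ((x(j := t)) k) ((x(j := t)) l) k l * ((x(j := t)) l - (x(j := t)) k))
     has_real_derivative sbcm_coupling E \<gamma> \<delta> x k l * (of_bool (l = j) - of_bool (k = j))) (at (x j))"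
  unfolding sbcm_w_eq_influence sbcm_coupling_def
  using DERIV_chain2[OF flux_has_derivative coordinate_difference_has_derivative, of \<gamma> \<delta> x j l k]
  by auto

lemma sbcm_degree_pos:
  assumes "E k l"
  shows "0 < sbcm_degree E \<gamma> \<delta> x k"
  unfolding sbcm_degree_def
  by (rule sum_pos2[of UNIV l]) (use assms in \<open>auto simp: sbcm_w_eq_influence influence_pos less_imp_le\<close>)

lemma sbcm_jacobian_persuadable:
  fixes x :: "'n::finite \<Rightarrow> real"
  assumes "k \<notin> Z" and "E k m" and "sbcm_f E Z \<gamma> \<delta> k x = 0"
  shows "sbcm_jacobian E Z \<gamma> \<delta> x k j =
    (sbcm_coupling E \<gamma> \<delta> x k j - of_bool (k = j) * (\<Sum>l\<in>UNIV. sbcm_coupling E \<gamma> \<delta> x k l))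
      / sbcm_degree E \<gamma> \<delta> x k"
proof -
  define y where "y t = x(j := t)" for t
  define numer where "numer t = (\<Sum>l\<in>UNIV. sbcm_w E \<gamma> \<delta> (y t k) (y t l) k l * (y t l - y t k))" for t
  define denom where "denom t = (\<Sum>l\<in>UNIV. sbcm_w E \<gamma> \<delta> (y t k) (y t l) k l)" for t
  have x_eq: "y (x j) = x"
    by (simp add: y_def)
  have denom_pos: "0 < denom (x j)"
    using sbcm_degree_pos[of E k m, OF assms(2)] by (simp add: x_eq denom_def sbcm_degree_def)
  have "numer (x j) = 0"
    using assms(1,3) denom_pos by (simp add: sbcm_f_def numer_def denom_def x_eq)
  moreover have "(numer has_real_derivative
      (\<Sum>l\<in>UNIV. sbcm_coupling E \<gamma> \<delta> x k l * (of_bool (l = j) - of_bool (k = j))))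
      (at (x j))"
    unfolding numer_def y_def by (intro DERIV_sum sbcm_numerator_term_has_derivative)
  moreover have "denom differentiable (at (x j))"
    unfolding denom_def y_def by (intro differentiable_sum ballI finite sbcm_w_along_coordinate_differentiable)
  ultimately have "((\<lambda>t. numer t / denom t) has_real_derivative
      (\<Sum>l\<in>UNIV. sbcm_coupling E \<gamma> \<delta> x k l * (of_bool (l = j) - of_bool (k = j)))
      / denom (x j)) (at (x j))"
    using denom_pos by (intro DERIV_divide_numerator_zero) auto
  moreover have "(\<Sum>l\<in>UNIV. sbcm_coupling E \<gamma> \<delta> x k l * (of_bool (l = j) - of_bool (k = j)))
      = sbcm_coupling E \<gamma> \<delta> x k j - of_bool (k = j) * (\<Sum>l\<in>UNIV. sbcm_coupling E \<gamma> \<delta> x k l)"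
    by (simp add: right_diff_distrib sum_subtractf sum_distrib_right[symmetric] mult.commute)
  moreover have "denom (x j) = sbcm_degree E \<gamma> \<delta> x k"
    by (simp add: denom_def sbcm_degree_def x_eq)
  moreover have "(\<lambda>t. sbcm_f E Z \<gamma> \<delta> k (y t)) = (\<lambda>t. numer t / denom t)"
    using assms(1) by (simp add: sbcm_f_def numer_def denom_def)
  ultimately show ?thesis
    unfolding sbcm_jacobian_def partial_deriv_def y_def by (simp add: DERIV_imp_deriv)
qed

lemma sbcm_jacobian_zealot:
  assumes "k \<in> Z"
  shows "sbcm_jacobian E Z \<gamma> \<delta> x k j = 0"
  using assms by (simp add: sbcm_jacobian_def partial_deriv_def sbcm_f_def)

lemma flux_deriv_minus: "flux_deriv \<gamma> \<delta> (- d) = flux_deriv \<gamma> \<delta> d"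
  by (simp add: flux_deriv_def influence_minus)

lemma flux_deriv_neg:
  assumes "0 < \<gamma>" and "1 / (2 * \<gamma>) < (1 - influence \<gamma> \<delta> d) * d\<^sup>2"
  shows "flux_deriv \<gamma> \<delta> d < 0"
proof -
  have "1 < 2 * \<gamma> * ((1 - influence \<gamma> \<delta> d) * d\<^sup>2)"
    using assms by (simp add: field_simps)
  then show ?thesis
    unfolding flux_deriv_def by (intro mult_pos_neg influence_pos) (simp add: algebra_simps)
qed

lemma sbcm_coupling_sym:
  assumes "\<And>k l. E k l \<Longrightarrow> E l k"
  shows "sbcm_coupling E \<gamma> \<delta> x k l = sbcm_coupling E \<gamma> \<delta> x l k"
  using assms flux_deriv_minus[of \<gamma> \<delta> "x k - x l"] by (auto simp: sbcm_coupling_def)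

lemma sbcm_coupling_sum_neg:
  fixes E :: "'n::finite \<Rightarrow> 'n \<Rightarrow> bool"
  assumes "0 < \<gamma>" and "E i j"
    and "\<And>j. E i j \<Longrightarrow> (1 - sbcm_w E \<gamma> \<delta> (x i) (x j) i j) * (x j - x i)\<^sup>2 > 1 / (2 * \<gamma>)"
  shows "(\<Sum>l\<in>UNIV. sbcm_coupling E \<gamma> \<delta> x i l) < 0"
proof -
  have neg: "sbcm_coupling E \<gamma> \<delta> x i l < 0" if "E i l" for l
    using flux_deriv_neg[OF \<open>0 < \<gamma>\<close>] assms(3)[OF that] that
    by (simp add: sbcm_coupling_def sbcm_w_eq_influence)
  have "(\<Sum>l\<in>UNIV. sbcm_coupling E \<gamma> \<delta> x i l) < (\<Sum>l\<in>(UNIV::'n set). 0)"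
    by (rule sum_strict_mono_ex1) (use neg \<open>E i j\<close> in \<open>auto simp: sbcm_coupling_def less_imp_le\<close>)
  then show ?thesis
    by simp
qed

theorem proposition1:
  fixes E :: "'n::finite \<Rightarrow> 'n \<Rightarrow> bool"
    and Z :: "'n set"
    and \<gamma> \<delta> :: real
    and x :: "'n \<Rightarrow> real"
  assumes sym: "\<And>i j. E i j \<Longrightarrow> E j i"
    and irrefl: "\<And>i. \<not> E i i"
    and nbr: "\<And>i. i \<notin> Z \<Longrightarrow> \<exists>j. E i j"
    and gamma_pos: "\<gamma> > 0"
    and delta_nonneg: "\<delta> \<ge> 0"
    and steady: "\<And>i. sbcm_f E Z \<gamma> \<delta> i x = 0"
    and node: "i \<notin> Z"
    and cond: "\<And>j. E i j \<Longrightarrow>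
       (1 - sbcm_w E \<gamma> \<delta> (x i) (x j) i j) * (x j - x i)^2 > 1 / (2 * \<gamma>)"
  shows "(\<exists>lam > 0. is_eigenvalue_sub (sbcm_jacobian E Z \<gamma> \<delta> x) (UNIV - Z) lam)
       \<and> (\<exists>lam > 0. is_eigenvalue_sub (sbcm_jacobian E Z \<gamma> \<delta> x) UNIV lam)"
proof -
  define M where "M k l = sbcm_coupling E \<gamma> \<delta> x k l
    - of_bool (k = l) * (\<Sum>m\<in>UNIV. sbcm_coupling E \<gamma> \<delta> x k m)" for k l
  have "\<exists>lam>0. is_eigenvalue_sub (sbcm_jacobian E Z \<gamma> \<delta> x) (UNIV - Z) lam"
  proof (rule symmetric_pencil_pos_eigenvalue)
    show "M a b = M b a" for a b
      by (auto simp: M_def sbcm_coupling_sym[OF sym])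
    show "0 < sbcm_degree E \<gamma> \<delta> x k" if "k \<in> UNIV - Z" for k
      using nbr that sbcm_degree_pos by blast
    show "sbcm_jacobian E Z \<gamma> \<delta> x k l = M k l / sbcm_degree E \<gamma> \<delta> x k" if "k \<in> UNIV - Z" for k l
      using nbr that steady sbcm_jacobian_persuadable unfolding M_def by blast
    obtain j where "E i j"
      using nbr node by blast
    then show "0 < M i i"
      using sbcm_coupling_sum_neg[OF gamma_pos _ cond] irrefl by (simp add: M_def sbcm_coupling_def)
  qed (use node in simp)
  then show ?thesis
    using is_eigenvalue_sub_UNIV_if_rows_vanish sbcm_jacobian_zealot by blast
qed

end
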